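(* Let $I\subset(0,1)$ be an admissible mesh family for $\Omega$, and for $h\in I$ let $\Sigma_h$ be the set of $(d-1)$-dimensional closed faces (facets) of the convex polytope $\overline{\Omega_h}$. If $\Omega$ is strictly convex, then $$\lim_{I\ni h\to0}\ \sup_{\boldsymbol{K}\in\Sigma_h}\ \sup_{\boldsymbol{x},\boldsymbol{x}'\in\boldsymbol{K}}|\boldsymbol{x}-\boldsymbol{x}'|=0.$$
   Context: $\Omega\subset\mathbb{R}^d$ is a bounded open convex domain; it is strictly convex if $\lambda\boldsymbol{x}+(1-\lambda)\boldsymbol{x}'\in\Omega$ for all $\boldsymbol{x},\boldsymbol{x}'\in\overline\Omega$, $0<\lambda<1$. $\Omega_\delta=\{\boldsymbol{x}\in\Omega:\operatorname{dist}(\boldsymbol{x},\partial\Omega)>\delta\}$. A mesh of $\Omega$ with parameter $h>0$ is a finite set $\mathcal T_h$ of closed $d$-simplices contained in $\overline\Omega$ such that: (i) for $T\ne T'$ in $\mathcal T_h$, $T\cap T'$ is a common sub-simplex of both of dimension at most $d-1$; (ii) $h=\max_{T\in\mathcal T_h}\operatorname{diam}T$; (iii) $\Omega_h:=\operatorname{Int}(\bigcup_{T\in\mathcal T_h}T)$ is convex; (iv) every vertex of $\mathcal T_h$ lying on $\partial\Omega_h$ belongs to $\partial\Omega$. An admissible mesh family is a set $I\subset(0,1)$ having $0$ as its unique accumulation point, together with a mesh $\mathcal T_h$ of $\Omega$ with parameter $h$ for each $h\in I$, such that for every $\delta>0$ there is $h_\delta>0$ with $\overline{\Omega_\delta}\subset\Omega_h$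 whenever $h\in I$ and $h<h_\delta$. *)

theory Defs
  imports "HOL-Analysis.Analysis"
begin

definition strictly_convex :: "'a::euclidean_space set \<Rightarrow> bool" where
  "strictly_convex \<Omega> \<longleftrightarrow>
     (\<forall>x\<in>closure \<Omega>. \<forall>x'\<in>closure \<Omega>. x \<noteq> x' \<longrightarrow>
        (\<forall>t::real. 0 < t \<and> t < 1 \<longrightarrow> t *\<^sub>R x + (1 - t) *\<^sub>R x' \<in> \<Omega>))"

definition inner_set :: "'a::euclidean_space set \<Rightarrow> real \<Rightarrow> 'a set" where
  "inner_set \<Omega> \<delta> = {x \<in> \<Omega>. infdist x (frontier \<Omega>) > \<delta>}"

definition subsimplex :: "'a::euclidean_space set \<Rightarrow> 'a set \<Rightarrow> bool" where
  "subsimplex S T \<longleftrightarrow> (\<exists>C D. \<not> affine_dependent C \<and> T = convex hull C \<and> D \<subseteq> C \<and> S = convex hull D)"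

definition mesh_vertices :: "'a::euclidean_space set set \<Rightarrow> 'a set" where
  "mesh_vertices \<T> = (\<Union>T\<in>\<T>. {v. v extreme_point_of T})"

definition mesh_domain :: "'a::euclidean_space set set \<Rightarrow> 'a set" where
  "mesh_domain \<T> = interior (\<Union>\<T>)"

definition is_mesh :: "'a::euclidean_space set \<Rightarrow> 'a set set \<Rightarrow> real \<Rightarrow> bool" where
  "is_mesh \<Omega> \<T> h \<longleftrightarrow>
     finite \<T> \<and> \<T> \<noteq> {} \<and>
     (\<forall>T\<in>\<T>. int DIM('a) simplex T \<and> T \<subseteq> closure \<Omega>) \<and>
     (\<forall>T\<in>\<T>. \<forall>T'\<in>\<T>. T \<noteq> T' \<longrightarrow>
        subsimplex (T \<inter> T') T \<and> subsimplex (T \<inter> T') T' \<and> aff_dim (T \<inter> T') \<le> int DIM('a) - 1) \<and>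
     h = Max (diameter ` \<T>) \<and>
     convex (mesh_domain \<T>) \<and>
     (\<forall>v\<in>mesh_vertices \<T>. v \<in> frontier (mesh_domain \<T>) \<longrightarrow> v \<in> frontier \<Omega>)"

definition admissible_mesh_family ::
    "'a::euclidean_space set \<Rightarrow> real set \<Rightarrow> (real \<Rightarrow> 'a set set) \<Rightarrow> bool" where
  "admissible_mesh_family \<Omega> I \<T> \<longleftrightarrow>
     I \<subseteq> {0<..<1} \<and> (0::real) islimpt I \<and> (\<forall>y. y islimpt I \<longrightarrow> y = 0) \<and>
     (\<forall>h\<in>I. h > 0 \<and> is_mesh \<Omega> (\<T> h) h) \<and>
     (\<forall>\<delta>>0. \<exists>h\<delta>>0. \<forall>h\<in>I. h < h\<delta> \<longrightarrow> closure (inner_set \<Omega> \<delta>) \<subseteq> mesh_domain (\<T> h))"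

end

theory Submission
  imports Defs
begin

text \<open>
  By strict convexity and compactness, for every \<open>\<epsilon> > 0\<close> there is \<open>\<delta> > 0\<close> such that the
  midpoint of any two points of \<open>closure \<Omega>\<close> at distance at least \<open>\<epsilon>\<close> lies in \<open>\<Omega>\<^sub>\<delta>\<close>.
  For small \<open>h\<close> the open convex set \<open>\<Omega>\<^sub>h\<close> contains \<open>\<Omega>\<^sub>\<delta>\<close>, so it contains all such
  midpoints. A facet of the polytope \<open>closure \<Omega>\<^sub>h\<close> is a proper face, hence convex and
  disjoint from the open set \<open>\<Omega>\<^sub>h\<close>; so it contains no two points at distance \<open>\<epsilon>\<close>.
\<close>

lemma closure_interior_full_dim_simplex:
  fixes T :: "'a::euclidean_space set"
  assumes "int DIM('a) simplex T"
  shows "closure (interior T) = T"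
proof -
  have "aff_dim T = DIM('a)" using aff_dim_simplex[OF assms] .
  then have "interior T = rel_interior T" by (simp add: interior_rel_interior_gen)
  moreover have "T \<noteq> {}" using \<open>aff_dim T = DIM('a)\<close> by auto
  ultimately show ?thesis
    using convex_closure_rel_interior[OF convex_simplex[OF assms]]
      closure_closed[OF closed_simplex[OF assms]] by simp
qed

lemma polytope_convex_Union:
  fixes \<P> :: "'a::euclidean_space set set"
  assumes "finite \<P>" "\<And>P. P \<in> \<P> \<Longrightarrow> polytope P" "convex (\<Union>\<P>)"
  shows "polytope (\<Union>\<P>)"
proof -
  have "\<forall>P\<in>\<P>. \<exists>V. finite V \<and> convex hull V = P"
    using assms(2) unfolding polytope_def by blast
  from bchoice[OF this] obtain V where V: "\<forall>P\<in>\<P>. finite (V P) \<and> convex hull (V P) = P"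
    by blast
  then have finV: "\<And>P. P \<in> \<P> \<Longrightarrow> finite (V P)"
    and hullV: "\<And>P. P \<in> \<P> \<Longrightarrow> convex hull (V P) = P"
    by blast+
  have "\<Union>\<P> = convex hull (\<Union>(V ` \<P>))"
  proof
    show "\<Union>\<P> \<subseteq> convex hull (\<Union>(V ` \<P>))"
    proof (rule Union_least)
      fix P assume P: "P \<in> \<P>"
      have "convex hull (V P) \<subseteq> convex hull (\<Union>(V ` \<P>))"
        using P by (intro hull_mono) blast
      then show "P \<subseteq> convex hull (\<Union>(V ` \<P>))"
        by (simp only: hullV[OF P])
    qed
    show "convex hull (\<Union>(V ` \<P>)) \<subseteq> \<Union>\<P>"
    proof (rule hull_minimal[where S = convex, OF _ assms(3)])
      show "\<Union>(V ` \<P>) \<subseteq> \<Union>\<P>"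
        using hullV hull_subset[of _ convex] by blast
    qed
  qed
  moreover have "finite (\<Union>(V ` \<P>))"
    using finV assms(1) by simp
  ultimately show ?thesis by (simp add: polytope_convex_hull)
qed

lemma is_meshD:
  fixes \<T> :: "'a::euclidean_space set set"
  assumes "is_mesh \<Omega> \<T> h"
  shows "finite \<T>" "\<T> \<noteq> {}" "\<And>T. T \<in> \<T> \<Longrightarrow> int DIM('a) simplex T"
    "\<And>T. T \<in> \<T> \<Longrightarrow> T \<subseteq> closure \<Omega>" "convex (mesh_domain \<T>)"
  using assms unfolding is_mesh_def by auto

lemma closure_mesh_domain:
  fixes \<T> :: "'a::euclidean_space set set"
  assumes "is_mesh \<Omega> \<T> h"
  shows "closure (mesh_domain \<T>) = \<Union>\<T>"
proof -
  note fin = is_meshD(1)[OF assms] and smp = is_meshD(3)[OF assms]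
  have "closure (mesh_domain \<T>) \<subseteq> \<Union>\<T>"
    unfolding mesh_domain_def using fin smp closed_simplex
    by (intro closure_minimal interior_subset closed_Union) auto
  moreover have "T \<subseteq> closure (mesh_domain \<T>)" if "T \<in> \<T>" for T
    using closure_interior_full_dim_simplex[OF smp[OF that]] that
    unfolding mesh_domain_def by (metis Union_upper closure_mono interior_mono)
  ultimately show ?thesis by blast
qed

lemma mesh_domain_nonempty:
  fixes \<T> :: "'a::euclidean_space set set"
  assumes "is_mesh \<Omega> \<T> h"
  shows "mesh_domain \<T> \<noteq> {}"
proof -
  obtain T where "T \<in> \<T>" "int DIM('a) simplex T"
    using is_meshD(2,3)[OF assms] by blast
  then have "T \<noteq> {}" using aff_dim_simplex by force
  then show ?thesis
    using closure_mesh_domain[OF assms] \<open>T \<in> \<T>\<close> by auto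
qed

lemma mesh_facet_exists:
  fixes \<T> :: "'a::euclidean_space set set"
  assumes "is_mesh \<Omega> \<T> h"
  obtains K where "K facet_of closure (mesh_domain \<T>)"
proof (rule polytope_facet_exists)
  have "finite \<T>" "\<And>T. T \<in> \<T> \<Longrightarrow> polytope T" "convex (mesh_domain \<T>)"
    using is_meshD[OF assms] simplex_imp_polytope by blast+
  then show "polytope (closure (mesh_domain \<T>))"
    using closure_mesh_domain[OF assms] polytope_convex_Union convex_closure by metis
  have "mesh_domain \<T> \<subseteq> interior (closure (mesh_domain \<T>))"
    by (simp add: interior_maximal mesh_domain_def closure_subset)
  then show "0 < aff_dim (closure (mesh_domain \<T>))"
    using mesh_domain_nonempty[OF assms] aff_dim_nonempty_interior by fastforce
qed

lemma proper_face_of_closure_disjoint_open: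
  fixes M :: "'a::euclidean_space set"
  assumes "open M" "K face_of closure M" "K \<noteq> closure M"
  shows "K \<inter> M = {}"
proof -
  have "M \<subseteq> interior (closure M)"
    by (rule interior_maximal[OF closure_subset assms(1)])
  then have "M \<subseteq> rel_interior (closure M)"
    using interior_subset_rel_interior by blast
  then show ?thesis
    using face_of_disjoint_rel_interior[OF assms(2,3)] by blast
qed

lemma facet_of_closure_diameter_le:
  fixes M :: "'a::euclidean_space set"
  assumes "open M" "K facet_of closure M" "0 \<le> \<epsilon>"
    and mid: "\<And>x y. x \<in> closure M \<Longrightarrow> y \<in> closure M \<Longrightarrow> \<epsilon> \<le> dist x y \<Longrightarrow> midpoint x y \<in> M"
  shows "diameter K \<le> \<epsilon>"
proof (rule diameter_le)
  have face: "K face_of closure M" and "K \<noteq> closure M"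
    using assms(2) by (auto simp: facet_of_def)
  then have disj: "K \<inter> M = {}"
    using proper_face_of_closure_disjoint_open[OF assms(1)] by blast
  fix x y assume xy: "x \<in> K" "y \<in> K"
  have "midpoint x y \<in> K"
    using face_of_imp_convex[OF face] xy
    by (meson convex_contains_segment midpoint_in_closed_segment subsetD)
  moreover have "x \<in> closure M" "y \<in> closure M"
    using face_of_imp_subset[OF face] xy by blast+
  ultimately have "\<not> \<epsilon> \<le> dist x y"
    using mid disj by blast
  then show "norm (x - y) \<le> \<epsilon>"
    by (simp add: dist_norm)
qed (use assms(3) in simp)

lemma strictly_convex_midpoint:
  assumes "strictly_convex \<Omega>" "x \<in> closure \<Omega>" "y \<in> closure \<Omega>" "x \<noteq> y"
  shows "midpoint x y \<in> \<Omega>"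
proof -
  have "\<forall>t::real. 0 < t \<and> t < 1 \<longrightarrow> t *\<^sub>R x + (1 - t) *\<^sub>R y \<in> \<Omega>"
    using assms unfolding strictly_convex_def by blast
  from this[rule_format, of "1/2"] show ?thesis
    by (simp add: midpoint_def scaleR_add_right)
qed

lemma infdist_frontier_pos:
  fixes \<Omega> :: "'a::euclidean_space set"
  assumes "bounded \<Omega>" "open \<Omega>" "x \<in> \<Omega>"
  shows "0 < infdist x (frontier \<Omega>)"
proof (rule infdist_pos_not_in_closed)
  show "frontier \<Omega> \<noteq> {}"
    using assms not_bounded_UNIV frontier_eq_empty by blast
  show "x \<notin> frontier \<Omega>"
    using assms(2,3) by (simp add: frontier_def interior_open)
qed simp

lemma strictly_convex_midpoint_in_inner_set:
  fixes \<Omega> :: "'a::euclidean_space set"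
  assumes "bounded \<Omega>" "open \<Omega>" "strictly_convex \<Omega>" "0 < \<epsilon>"
  obtains \<delta> where "0 < \<delta>"
    "\<And>x y. x \<in> closure \<Omega> \<Longrightarrow> y \<in> closure \<Omega> \<Longrightarrow> \<epsilon> \<le> dist x y \<Longrightarrow> midpoint x y \<in> inner_set \<Omega> \<delta>"
proof -
  define S where "S = {p \<in> closure \<Omega> \<times> closure \<Omega>. \<epsilon> \<le> dist (fst p) (snd p)}"
  define g where "g p = infdist (midpoint (fst p) (snd p)) (frontier \<Omega>)" for p :: "'a \<times> 'a"
  have mid: "midpoint (fst p) (snd p) \<in> \<Omega>" if "p \<in> S" for p
    using that assms(3,4) strictly_convex_midpoint by (fastforce simp: S_def)
  show ?thesis
  proof (cases "S = {}")
    case True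
    then show ?thesis
      by (intro that[of 1]) (auto simp: S_def)
  next
    case False
    have "compact S"
      unfolding S_def using assms(1)
      by (intro compact_Int_closed[where T = "{p. \<epsilon> \<le> dist (fst p) (snd p)}", unfolded Int_def, simplified]
          compact_Times closed_Collect_le continuous_intros) auto
    moreover have "continuous_on S g"
      unfolding g_def midpoint_def by (intro continuous_intros)
    ultimately obtain p0 where "p0 \<in> S" and min: "\<And>p. p \<in> S \<Longrightarrow> g p0 \<le> g p"
      using continuous_attains_inf[OF _ False] by blast
    have "0 < g p0"
      unfolding g_def using infdist_frontier_pos[OF assms(1,2) mid[OF \<open>p0 \<in> S\<close>]] .
    show ?thesis
    proof (rule that[of "g p0 / 2"])
      fix x y assume "x \<in> closure \<Omega>" "y \<in> closure \<Omega>" "\<epsilon> \<le> dist x y"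
      then have "(x, y) \<in> S" by (simp add: S_def)
      then show "midpoint x y \<in> inner_set \<Omega> (g p0 / 2)"
        using min[of "(x, y)"] mid[of "(x, y)"] \<open>0 < g p0\<close> by (simp add: inner_set_def g_def)
    qed (use \<open>0 < g p0\<close> in simp)
  qed
qed

lemma admissible_mesh_familyD:
  assumes "admissible_mesh_family \<Omega> I \<T>"
  shows "\<And>h. h \<in> I \<Longrightarrow> is_mesh \<Omega> (\<T> h) h"
    and "0 < \<delta> \<Longrightarrow> \<exists>h\<delta>>0. \<forall>h\<in>I. h < h\<delta> \<longrightarrow> closure (inner_set \<Omega> \<delta>) \<subseteq> mesh_domain (\<T> h)"
  using assms unfolding admissible_mesh_family_def by auto

lemma mesh_facet_diameters_le:
  fixes \<T> :: "'a::euclidean_space set set"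
  assumes mesh: "is_mesh \<Omega> \<T> h" and "0 \<le> \<epsilon>"
    and mid: "\<And>x y. x \<in> closure \<Omega> \<Longrightarrow> y \<in> closure \<Omega> \<Longrightarrow> \<epsilon> \<le> dist x y \<Longrightarrow> midpoint x y \<in> mesh_domain \<T>"
  shows "\<bar>SUP K\<in>{K. K facet_of closure (mesh_domain \<T>)}. diameter K\<bar> \<le> \<epsilon>"
proof -
  have closure_eq: "closure (mesh_domain \<T>) = \<Union>\<T>"
    by (rule closure_mesh_domain[OF mesh])
  have "closure (mesh_domain \<T>) \<subseteq> closure \<Omega>"
    using is_meshD(4)[OF mesh] closure_eq by blast
  then have le: "diameter K \<le> \<epsilon>" if "K facet_of closure (mesh_domain \<T>)" for K
    using facet_of_closure_diameter_le[OF _ that \<open>0 \<le> \<epsilon>\<close>] mid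
    by (auto simp: mesh_domain_def)
  obtain K0 where K0: "K0 facet_of closure (mesh_domain \<T>)"
    using mesh_facet_exists[OF mesh] .
  have "compact (\<Union>\<T>)"
    using is_meshD(1,3)[OF mesh] compact_simplex by (intro compact_Union) auto
  moreover have "K0 \<subseteq> \<Union>\<T>"
    using facet_of_imp_subset[OF K0] closure_eq by simp
  ultimately have "bounded K0"
    using compact_imp_bounded bounded_subset by metis
  then have "0 \<le> diameter K0"
    by (rule diameter_ge_0)
  moreover have "diameter K0 \<le> (SUP K\<in>{K. K facet_of closure (mesh_domain \<T>)}. diameter K)"
    using K0 le by (intro cSUP_upper bdd_aboveI[of _ \<epsilon>]) auto
  moreover have "(SUP K\<in>{K. K facet_of closure (mesh_domain \<T>)}. diameter K) \<le> \<epsilon>"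
    using K0 le by (intro cSUP_least) auto
  ultimately show ?thesis
    by linarith
qed

theorem lemma6p1:
  fixes \<Omega> :: "'a::euclidean_space set" and I :: "real set" and \<T> :: "real \<Rightarrow> 'a set set"
  assumes "bounded \<Omega>" and "open \<Omega>" and "convex \<Omega>"
    and "admissible_mesh_family \<Omega> I \<T>"
    and "strictly_convex \<Omega>"
  shows "((\<lambda>h. SUP K\<in>{K. K facet_of closure (mesh_domain (\<T> h))}. diameter K) \<longlongrightarrow> 0) (at 0 within I)"
proof (rule tendstoI)
  fix \<epsilon> :: real assume "0 < \<epsilon>"
  then obtain \<delta> where "0 < \<delta>" and mid:
    "\<And>x y. x \<in> closure \<Omega> \<Longrightarrow> y \<in> closure \<Omega> \<Longrightarrow> \<epsilon>/2 \<le> dist x y \<Longrightarrow> midpoint x y \<in> inner_set \<Omega> \<delta>"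
    using strictly_convex_midpoint_in_inner_set[OF assms(1,2,5), of "\<epsilon>/2"] by auto
  obtain h\<delta> where "0 < h\<delta>"
    and inner: "\<And>h. h \<in> I \<Longrightarrow> h < h\<delta> \<Longrightarrow> closure (inner_set \<Omega> \<delta>) \<subseteq> mesh_domain (\<T> h)"
    using admissible_mesh_familyD(2)[OF assms(4) \<open>0 < \<delta>\<close>] by blast
  note mesh = admissible_mesh_familyD(1)[OF assms(4)]
  show "\<forall>\<^sub>F h in at 0 within I. dist (SUP K\<in>{K. K facet_of closure (mesh_domain (\<T> h))}. diameter K) 0 < \<epsilon>"
    unfolding eventually_at
  proof (intro exI[of _ h\<delta>] conjI ballI impI)
    fix h assume "h \<in> I" "h \<noteq> 0 \<and> dist h 0 < h\<delta>"
    then have "inner_set \<Omega> \<delta> \<subseteq> mesh_domain (\<T> h)"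
      using inner closure_subset[of "inner_set \<Omega> \<delta>"] by force
    then have "\<bar>SUP K\<in>{K. K facet_of closure (mesh_domain (\<T> h))}. diameter K\<bar> \<le> \<epsilon>/2"
      using mid \<open>0 < \<epsilon>\<close> by (intro mesh_facet_diameters_le[OF mesh[OF \<open>h \<in> I\<close>]]) auto
    with \<open>0 < \<epsilon>\<close> show "dist (SUP K\<in>{K. K facet_of closure (mesh_domain (\<T> h))}. diameter K) 0 < \<epsilon>"
      by simp
  qed (rule \<open>0 < h\<delta>\<close>)
qed

end
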